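(* Let $A$ be a Banach lattice algebra and let $\{p_\lambda\}_{\lambda\in\Lambda}\subseteq BP_l(A)\cap BP_r(A)$ satisfy $p_\alpha p_\beta=\delta_{\alpha\beta}p_\alpha$ for all $\alpha,\beta\in\Lambda$. If $\Phi\subseteq\Lambda\times\Lambda$ is finite, then for all $x\in A_+$, \[\bigvee_{(\alpha,\beta)\in\Phi}p_\alpha x p_\beta=\sum_{(\alpha,\beta)\in\Phi}p_\alpha x p_\beta .\]
   Context: A Banach lattice algebra is a real Banach lattice $A$ equipped with an associative bilinear product making $(A,\cdot)$ a Banach algebra ($\|xy\|\le\|x\|\|y\|$) such that $xy\ge 0$ whenever $x,y\ge0$. For $a\in A$, $L_a,R_a\colon A\to A$ denote $L_a(x)=ax$, $R_a(x)=xa$. A band projection on a Banach lattice $X$ is an operator $P\colon X\to X$ with $P^2=P$ and $0\le P\le I_X$. $BP_l(A)=\{a\in A_+: L_a \text{ is a band projection}\}$, $BP_r(A)=\{a\in A_+: R_a\text{ is a band projection}\}$. $\delta_{\alpha\beta}$ is the Kronecker delta. *)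

theory Defs
  imports "HOL-Analysis.Analysis"
begin


class banach_lattice_algebra = real_normed_algebra + banach + ordered_real_vector + lattice +
  assumes lattice_norm: "sup x (- x) \<le> sup y (- y) \<Longrightarrow> norm x \<le> norm y"
    and mult_pos: "0 \<le> x \<Longrightarrow> 0 \<le> y \<Longrightarrow> 0 \<le> x * y"

definition band_projection :: "('a::{ordered_real_vector} \<Rightarrow> 'a) \<Rightarrow> bool" where
  "band_projection P \<longleftrightarrow> linear P \<and> P \<circ> P = P \<and> (\<forall>x. 0 \<le> x \<longrightarrow> 0 \<le> P x \<and> P x \<le> x)"

definition BP_l :: "'a::banach_lattice_algebra set" where
  "BP_l = {a. 0 \<le> a \<and> band_projection (\<lambda>x. a * x)}"

definition BP_r :: "'a::banach_lattice_algebra set" where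
  "BP_r = {a. 0 \<le> a \<and> band_projection (\<lambda>x. x * a)}"

end

theory Submission
  imports Defs
begin

text \<open>For \<open>(\<alpha>, \<beta>) \<in> \<Phi>\<close>, the map \<open>v \<mapsto> p\<^sub>\<alpha> v p\<^sub>\<beta>\<close> is a band projection fixing
  \<open>p\<^sub>\<alpha> x p\<^sub>\<beta>\<close> and annihilating every other term of the sum, by orthogonality of the \<open>p\<^sub>\<lambda>\<close>.
  A band projection fixing \<open>y \<ge> 0\<close> also fixes \<open>y \<sqinter> z\<close>, so if it kills \<open>z \<ge> 0\<close> then
  \<open>y \<sqinter> z = 0\<close>. Hence each term is disjoint from the sum of the others, and for disjoint
  positive elements the supremum is the sum; induction on \<open>\<Phi>\<close> finishes the proof.\<close>

lemma sup_eq_add_if_inf_eq_0: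
  fixes y z :: "'a::{ordered_ab_group_add, lattice}"
  assumes "0 \<le> y" "0 \<le> z" "inf y z = 0"
  shows "sup y z = y + z"
proof (rule antisym)
  show "sup y z \<le> y + z"
    using assms by (simp add: add_increasing add_increasing2)
  have "y + z - sup y z \<le> inf y z"
    by (simp add: algebra_simps)
  then show "y + z \<le> sup y z"
    using assms by simp
qed

lemma Sup_fin_image_eq_sum_if_disjoint:
  fixes f :: "'i \<Rightarrow> 'a::{ordered_comm_monoid_add, ordered_ab_group_add, lattice}"
  assumes "finite I" "I \<noteq> {}"
    and nonneg: "\<And>i. i \<in> I \<Longrightarrow> 0 \<le> f i"
    and disjoint: "\<And>i. i \<in> I \<Longrightarrow> inf (f i) (sum f (I - {i})) = 0"
  shows "Sup_fin (f ` I) = sum f I"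
  using assms(1,2) nonneg disjoint
proof (induction I rule: finite_ne_induct)
  case (singleton i)
  then show ?case by simp
next
  case (insert i F)
  have "0 \<le> f i" "0 \<le> sum f F"
    using insert.prems(1) by (auto intro: sum_nonneg)
  moreover have "inf (f i) (sum f F) = 0"
    using insert.prems(2)[of i] insert.hyps(3) by (simp add: insert_Diff_if)
  moreover have "\<And>j. j \<in> F \<Longrightarrow> inf (f j) (sum f (F - {j})) = 0"
  proof -
    fix j assume j: "j \<in> F"
    have "sum f (F - {j}) \<le> sum f (insert i F - {j})"
      using insert.hyps(1) insert.prems(1) by (intro sum_mono2) auto
    then have "inf (f j) (sum f (F - {j})) \<le> 0"
      using insert.prems(2)[of j] j by (metis inf_mono insertI2 order_refl)
    moreover have "0 \<le> inf (f j) (sum f (F - {j}))"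
      using insert.prems(1) j by (auto intro: sum_nonneg)
    ultimately show "inf (f j) (sum f (F - {j})) = 0" by simp
  qed
  ultimately show ?case
    using insert by (simp add: sup_eq_add_if_inf_eq_0)
qed

lemma band_projection_mono:
  assumes "band_projection P" "u \<le> v"
  shows "P u \<le> P v"
proof -
  have "0 \<le> P (v - u)"
    using assms unfolding band_projection_def by simp
  then show ?thesis
    using assms(1) unfolding band_projection_def by (simp add: linear_diff)
qed

lemma band_projection_fixes_below:
  assumes bp: "band_projection P" and "0 \<le> w" "w \<le> y" "P y = y"
  shows "P w = w"
proof -
  have "P (y - w) \<le> y - w"
    using bp assms(3) unfolding band_projection_def by simp
  then have "w \<le> P w"
    using bp assms(4) unfolding band_projection_def by (simp add: linear_diff)
  then show ?thesis
    using bp assms(2) unfolding band_projection_def by (simp add: antisym)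
qed

lemma band_projection_inf_eq_0:
  fixes y z :: "'a::{ordered_real_vector, lattice}"
  assumes bp: "band_projection P" and "0 \<le> y" "0 \<le> z" "P y = y" "P z = 0"
  shows "inf y z = 0"
proof -
  have "P (inf y z) = inf y z"
    using assms(2,3) by (intro band_projection_fixes_below[OF bp _ inf_le1 assms(4)]) simp
  moreover have "P (inf y z) \<le> 0"
    using band_projection_mono[OF bp, of "inf y z" z] assms(5) by simp
  ultimately show ?thesis
    using assms(2,3) by (simp add: antisym)
qed

lemma band_projection_comp:
  assumes P: "band_projection P" and Q: "band_projection Q" and "P \<circ> Q = Q \<circ> P"
  shows "band_projection (P \<circ> Q)"
proof -
  have "P \<circ> Q \<circ> (P \<circ> Q) = P \<circ> P \<circ> (Q \<circ> Q)"
    using assms(3) by (metis comp_assoc)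
  moreover have "0 \<le> P (Q v) \<and> P (Q v) \<le> v" if "0 \<le> v" for v
    using P Q that unfolding band_projection_def by (meson order_trans)
  ultimately show ?thesis
    using P Q unfolding band_projection_def by (simp add: linear_compose)
qed

lemma band_projection_sandwich:
  assumes "a \<in> BP_l" "b \<in> BP_r"
  shows "band_projection (\<lambda>v. a * v * b)"
proof -
  have "band_projection ((\<lambda>v. a * v) \<circ> (\<lambda>v. v * b))"
    using assms unfolding BP_l_def BP_r_def
    by (intro band_projection_comp) (auto simp: comp_def mult.assoc)
  then show ?thesis
    by (simp add: comp_def mult.assoc)
qed

theorem mainTheorem2:
  fixes p :: "'i \<Rightarrow> 'a::banach_lattice_algebra"
    and \<Phi> :: "('i \<times> 'i) set"
    and x :: 'a
  assumes "\<And>l. p l \<in> BP_l \<inter> BP_r"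
    and "\<And>\<alpha> \<beta>. p \<alpha> * p \<beta> = (if \<alpha> = \<beta> then p \<alpha> else 0)"
    and "finite \<Phi>" and "\<Phi> \<noteq> {}"
    and "0 \<le> x"
  shows "Sup_fin ((\<lambda>(\<alpha>, \<beta>). p \<alpha> * x * p \<beta>) ` \<Phi>) = (\<Sum>(\<alpha>, \<beta>)\<in>\<Phi>. p \<alpha> * x * p \<beta>)"
proof (rule Sup_fin_image_eq_sum_if_disjoint[OF assms(3,4)], safe)
  have p_nonneg: "0 \<le> p l" for l
    using assms(1) unfolding BP_l_def by auto
  have sandwich_nonneg: "0 \<le> p \<alpha> * x * p \<beta>" for \<alpha> \<beta>
    using p_nonneg assms(5) by (simp add: mult_pos)
  then show "0 \<le> p \<alpha> * x * p \<beta>" for \<alpha> \<beta> .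
  fix a b assume "(a, b) \<in> \<Phi>"
  let ?P = "\<lambda>v. p a * v * p b"
  have sandwich_assoc: "?P (p c * x * p d) = (p a * p c) * x * (p d * p b)" for c d
    by (simp add: mult.assoc)
  have "?P (p a * x * p b) = p a * x * p b"
    using assms(2)[of a a] assms(2)[of b b] by (simp add: sandwich_assoc)
  moreover have off_diagonal: "?P (p c * x * p d) = 0" if "(c, d) \<noteq> (a, b)" for c d
    using that assms(2)[of a c] assms(2)[of d b] by (auto simp: sandwich_assoc)
  then have "?P (\<Sum>(\<alpha>, \<beta>)\<in>\<Phi> - {(a, b)}. p \<alpha> * x * p \<beta>) = 0"
    unfolding sum_distrib_left sum_distrib_right
    by (intro sum.neutral) (use off_diagonal in auto)
  ultimately show "inf (p a * x * p b) (\<Sum>(\<alpha>, \<beta>)\<in>\<Phi> - {(a, b)}. p \<alpha> * x * p \<beta>) = 0"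
    using assms(1) sandwich_nonneg
    by (intro band_projection_inf_eq_0[OF band_projection_sandwich]) (auto intro: sum_nonneg)
qed

end
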